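(* Let $\Omega$ be a norm on $\mathbb{R}^p$, fix $J\subset\{1,\dots,p\}$, and let $g$ be the gauge function described in the context. Then: (1) $g$ is a norm on $\mathbb{R}^p$. (2) For every allowed set $S$ and every $\beta\in\mathbb{R}^p$: $g(\beta)\le\Upsilon_S(\beta)\le\Omega(\beta)$ and $g(\beta)\le\Upsilon_S(\beta_{f(J)})$. (3) $g$ is the dual norm of the norm $\beta\mapsto\max_{S\text{ allowed}}\max\big(\Upsilon_S^{*}(\beta),\Upsilon_S^{*}(\beta_{f(J)})\big)$; moreover, for every allowed $S$ and every $z\in\mathbb{R}^p$, $\Upsilon_S^{*}(z)=\max\big(\Omega^{*}(z_S),(\Omega^{S^{c}})^{*}(z_{S^{c}})\big)$. (4) $g(\beta_{J^{c}})\le g(\beta)$ for all $\beta\in\mathbb{R}^p$.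
   Context: For $\beta\in\mathbb{R}^p$ and $J\subset\{1,\dots,p\}$, $\beta_J$ is the vector with entries $\beta_j1\{j\in J\}$ (or its restriction to $J$, depending on context). A set $S\subset\{1,\dots,p\}$ is allowed (for $\Omega$) if there is a norm $\Omega^{S^{c}}$ on $\mathbb{R}^{|S^{c}|}$ with $\Omega(\beta_S)+\Omega^{S^{c}}(\beta_{S^{c}})\le\Omega(\beta)$ for all $\beta$; for each allowed $S$ such a norm is fixed and $\Upsilon_S(\beta):=\Omega(\beta_S)+\Omega^{S^{c}}(\beta_{S^{c}})$. For a norm $N$, $N^{*}(z):=\sup_{N(\beta)\le1}\beta^{T}z$ is its dual norm. Let $\beta_{f(J)}:=\beta_J-\beta_{J^{c}}$ and $\mathrm{flip}_J(B):=\{\beta_{f(J)}:\beta\in B\}$ for $B\subset\mathbb{R}^p$. Let $\overline{B}:=\bigcup_{S\text{ allowed}}\{\beta:\Upsilon_S(\beta)\le1\}$, $B_g:=\mathrm{Conv}(\overline{B}\cup\mathrm{flip}_J(\overline{B}))$, and $g(x):=\inf\{t>0:x\in tB_g\}$. *)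

theory Defs
  imports "HOL-Analysis.Analysis"
begin

text \<open>Vectors in R^p are modelled as real^'n with 'n a finite index type (p = CARD('n)).\<close>

definition restr :: "'n set \<Rightarrow> real^'n \<Rightarrow> real^'n" where
  "restr J \<beta> = (\<chi> i. if i \<in> J then \<beta> $ i else 0)"

definition flipv :: "'n set \<Rightarrow> real^'n \<Rightarrow> real^'n" where
  "flipv J \<beta> = restr J \<beta> - restr (- J) \<beta>"

definition flipset :: "'n set \<Rightarrow> (real^'n) set \<Rightarrow> (real^'n) set" where
  "flipset J B = flipv J ` B"

definition is_norm :: "(real^'n \<Rightarrow> real) \<Rightarrow> bool" where
  "is_norm N \<longleftrightarrow> (\<forall>x. 0 \<le> N x) \<and> (\<forall>x. N x = 0 \<longleftrightarrow> x = 0)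
     \<and> (\<forall>c x. N (c *s x) = \<bar>c\<bar> * N x) \<and> (\<forall>x y. N (x + y) \<le> N x + N y)"

text \<open>A norm on R^{|A|}, represented as a function on R^p that only depends on the
  coordinates in A (i.e. N x = N (x_A)) and is a norm on those coordinates.\<close>
definition norm_on :: "'n set \<Rightarrow> (real^'n \<Rightarrow> real) \<Rightarrow> bool" where
  "norm_on A N \<longleftrightarrow> (\<forall>x. N x = N (restr A x)) \<and> (\<forall>x. 0 \<le> N x)
     \<and> (\<forall>x. N x = 0 \<longleftrightarrow> restr A x = 0)
     \<and> (\<forall>c x. N (c *s x) = \<bar>c\<bar> * N x) \<and> (\<forall>x y. N (x + y) \<le> N x + N y)"

definition dual_norm :: "(real^'n \<Rightarrow> real) \<Rightarrow> real^'n \<Rightarrow> real" where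
  "dual_norm N z = Sup {\<beta> \<bullet> z | \<beta>. N \<beta> \<le> 1}"

definition allowed :: "(real^'n \<Rightarrow> real) \<Rightarrow> 'n set \<Rightarrow> bool" where
  "allowed \<Omega> S \<longleftrightarrow> (\<exists>N. norm_on (- S) N \<and>
      (\<forall>\<beta>. \<Omega> (restr S \<beta>) + N (restr (- S) \<beta>) \<le> \<Omega> \<beta>))"

text \<open>Upsilon_S, for the fixed choice Omc S of the norm Omega^{S^c}.\<close>
definition Upsilon :: "(real^'n \<Rightarrow> real) \<Rightarrow> ('n set \<Rightarrow> real^'n \<Rightarrow> real) \<Rightarrow> 'n set \<Rightarrow> real^'n \<Rightarrow> real" where
  "Upsilon \<Omega> Omc S \<beta> = \<Omega> (restr S \<beta>) + Omc S (restr (- S) \<beta>)"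

definition Bbar :: "(real^'n \<Rightarrow> real) \<Rightarrow> ('n set \<Rightarrow> real^'n \<Rightarrow> real) \<Rightarrow> (real^'n) set" where
  "Bbar \<Omega> Omc = (\<Union>S\<in>{S. allowed \<Omega> S}. {\<beta>. Upsilon \<Omega> Omc S \<beta> \<le> 1})"

definition Bg :: "(real^'n \<Rightarrow> real) \<Rightarrow> ('n set \<Rightarrow> real^'n \<Rightarrow> real) \<Rightarrow> 'n set \<Rightarrow> (real^'n) set" where
  "Bg \<Omega> Omc J = convex hull (Bbar \<Omega> Omc \<union> flipset J (Bbar \<Omega> Omc))"

definition gauge_g :: "(real^'n \<Rightarrow> real) \<Rightarrow> ('n set \<Rightarrow> real^'n \<Rightarrow> real) \<Rightarrow> 'n set \<Rightarrow> real^'n \<Rightarrow> real" where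
  "gauge_g \<Omega> Omc J x = Inf {t. t > 0 \<and> x \<in> (\<lambda>y. t *s y) ` Bg \<Omega> Omc J}"

definition Mnorm :: "(real^'n \<Rightarrow> real) \<Rightarrow> ('n set \<Rightarrow> real^'n \<Rightarrow> real) \<Rightarrow> 'n set \<Rightarrow> real^'n \<Rightarrow> real" where
  "Mnorm \<Omega> Omc J \<beta> = Max {max (dual_norm (Upsilon \<Omega> Omc S) \<beta>)
                                (dual_norm (Upsilon \<Omega> Omc S) (flipv J \<beta>)) | S. allowed \<Omega> S}"

end

theory Submission
  imports Defs
begin

text \<open>Each Upsilon_S is the sum of two norms living on the complementary coordinate blocks S and
  S^c, so its dual is the maximum of the two block duals; allowedness gives Omega(beta_S) <= Omega(beta),
  which identifies the S-block dual with Omega^*(z_S). A functional is bounded by 1 on a convex hull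
  iff it is on the generating set, so the unit ball of M = max_S max(Upsilon_S^*, Upsilon_S^* o flip)
  is exactly the polar of B_g. Since B_g is compact, convex and contains 0, separation (the bipolar
  theorem) shows that B_g is the unit ball of M^*, hence g = M^*. The bounds on g follow from
  Upsilon_S^* <= M, and the last claim from beta_{J^c} = (beta - beta_{f(J)})/2, the flip invariance
  of M and the self-adjointness of coordinate restriction.\<close>

lemma restr_add: "restr S (x + y) = restr S x + restr S y"
  by (simp add: restr_def vec_eq_iff)

lemma restr_scaleR: "restr S (c *\<^sub>R x) = c *\<^sub>R restr S x"
  by (simp add: restr_def vec_eq_iff)

lemma restr_restr: "restr S (restr S x) = restr S x"
  by (simp add: restr_def vec_eq_iff)

lemma restr_restr_Compl: "restr (- S) (restr S x) = 0" "restr S (restr (- S) x) = 0"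
  by (auto simp: restr_def vec_eq_iff)

lemma restr_zero [simp]: "restr S 0 = 0"
  by (simp add: restr_def vec_eq_iff)

lemma restr_add_restr_Compl: "restr S x + restr (- S) x = x"
  by (simp add: restr_def vec_eq_iff)

lemma restr_UNIV: "restr UNIV x = x"
  by (simp add: restr_def vec_eq_iff)

lemma inner_restr: "restr S x \<bullet> y = x \<bullet> restr S y"
  unfolding restr_def inner_vec_def by (rule sum.cong) auto

lemma flipv_flipv: "flipv J (flipv J x) = x"
  by (simp add: flipv_def restr_def vec_eq_iff)

lemma inner_flipv: "flipv J x \<bullet> y = x \<bullet> flipv J y"
  unfolding flipv_def restr_def inner_vec_def by (rule sum.cong) auto

lemma linear_flipv: "linear (flipv J)"
  by (rule linearI) (simp_all add: flipv_def restr_def vec_eq_iff algebra_simps)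

lemma inj_flipv: "inj (flipv J)"
  by (metis flipv_flipv injI)

lemma restr_Compl_eq_flipv: "restr (- J) y = (1/2) *\<^sub>R (y + - flipv J y)"
  by (simp add: flipv_def restr_def vec_eq_iff)

lemma allowed_UNIV: "allowed \<Omega> UNIV"
  unfolding allowed_def
  by (rule exI[of _ "\<lambda>_. 0"]) (simp add: norm_on_def restr_def vec_eq_iff)

lemma norm_on_UNIV_iff: "norm_on UNIV N \<longleftrightarrow> is_norm N"
  by (simp add: norm_on_def is_norm_def restr_UNIV)

lemma is_normD:
  assumes "is_norm N"
  shows "0 \<le> N x" "N x = 0 \<longleftrightarrow> x = 0" "N (c *\<^sub>R x) = \<bar>c\<bar> * N x" "N (x + y) \<le> N x + N y"
  using assms by (simp_all add: is_norm_def scalar_mult_eq_scaleR)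

lemma is_norm_zero: "is_norm N \<Longrightarrow> N 0 = 0"
  by (simp add: is_normD(2))

lemma is_norm_uminus: "is_norm N \<Longrightarrow> N (- x) = N x"
  using is_normD(3)[of N "-1" x] by simp

lemma norm_onD:
  assumes "norm_on A Q"
  shows "Q x = Q (restr A x)" "0 \<le> Q x" "Q x = 0 \<longleftrightarrow> restr A x = 0"
    "Q (c *\<^sub>R x) = \<bar>c\<bar> * Q x" "Q (x + y) \<le> Q x + Q y"
  using assms by (simp_all add: norm_on_def scalar_mult_eq_scaleR)

lemma norm_on_zero: "norm_on A Q \<Longrightarrow> Q 0 = 0"
  using norm_onD(3)[of A Q 0] by simp

lemma is_normI:
  assumes "\<And>x. 0 \<le> N x" "\<And>x. N x = 0 \<longleftrightarrow> x = 0"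
    and scale: "\<And>c x. N (c *\<^sub>R x) \<le> \<bar>c\<bar> * N x"
    and "\<And>x y. N (x + y) \<le> N x + N y"
  shows "is_norm N"
proof -
  have "N (c *\<^sub>R x) = \<bar>c\<bar> * N x" for c x
  proof (cases "c = 0")
    case True
    then show ?thesis using assms(2)[of 0] by simp
  next
    case False
    have "N x = N ((1/c) *\<^sub>R (c *\<^sub>R x))" using False by simp
    also have "\<dots> \<le> \<bar>1/c\<bar> * N (c *\<^sub>R x)" by (rule scale)
    finally have "\<bar>c\<bar> * N x \<le> N (c *\<^sub>R x)" using False by (simp add: field_simps)
    with scale[of c x] show ?thesis by simp
  qed
  with assms show ?thesis by (simp add: is_norm_def scalar_mult_eq_scaleR)
qed

lemma is_norm_compose_linear:
  assumes N: "is_norm N" and f: "linear f" "inj f"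
  shows "is_norm (\<lambda>x. N (f x))"
  using is_normD[OF N] linear_injective_0[OF f(1)] f(2)
  by (intro is_normI) (auto simp: linear_cmul[OF f(1)] linear_add[OF f(1)] linear_0[OF f(1)])

lemma is_norm_Max:
  assumes "finite I" "I \<noteq> {}" and N: "\<And>i. i \<in> I \<Longrightarrow> is_norm (N i)"
  shows "is_norm (\<lambda>x. Max ((\<lambda>i. N i x) ` I))"
proof (rule is_normI)
  obtain i where i: "i \<in> I" using assms(2) by blast
  fix x
  have ge: "N i x \<le> Max ((\<lambda>i. N i x) ` I)" using i assms(1) by simp
  show "0 \<le> Max ((\<lambda>i. N i x) ` I)" by (rule order_trans[OF is_normD(1)[OF N[OF i]] ge])
  show "Max ((\<lambda>i. N i x) ` I) = 0 \<longleftrightarrow> x = 0"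
  proof
    assume "Max ((\<lambda>i. N i x) ` I) = 0"
    with ge is_normD(1)[OF N[OF i], of x] have "N i x = 0" by linarith
    then show "x = 0" using is_normD(2)[OF N[OF i]] by blast
  qed (use assms in \<open>simp add: is_norm_zero\<close>)
next
  fix c x y
  show "Max ((\<lambda>i. N i (c *\<^sub>R x)) ` I) \<le> \<bar>c\<bar> * Max ((\<lambda>i. N i x) ` I)"
    using assms by (simp add: is_normD(3) mult_left_mono)
  show "Max ((\<lambda>i. N i (x + y)) ` I) \<le> Max ((\<lambda>i. N i x) ` I) + Max ((\<lambda>i. N i y) ` I)"
  proof (subst Max_le_iff, simp_all add: assms, intro ballI)
    fix j assume j: "j \<in> I"
    have "N j (x + y) \<le> N j x + N j y" by (rule is_normD(4)[OF N[OF j]])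
    also have "\<dots> \<le> Max ((\<lambda>i. N i x) ` I) + Max ((\<lambda>i. N i y) ` I)"
      using j assms(1) by (intro add_mono) simp_all
    finally show "N j (x + y) \<le> Max ((\<lambda>i. N i x) ` I) + Max ((\<lambda>i. N i y) ` I)" .
  qed
qed

lemma is_norm_max: "is_norm N \<Longrightarrow> is_norm M \<Longrightarrow> is_norm (\<lambda>x. max (N x) (M x))"
  using is_norm_Max[of "{N, M}" "\<lambda>N. N"] by auto

lemma is_norm_continuous: assumes "is_norm N" shows "continuous_on UNIV N"
proof (rule convex_on_continuous)
  show "convex_on UNIV N"
  proof (rule convex_onI)
    fix t :: real and x y assume "0 < t" "t < 1"
    then show "N ((1 - t) *\<^sub>R x + t *\<^sub>R y) \<le> (1 - t) * N x + t * N y"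
      using is_normD(4)[OF assms, of "(1 - t) *\<^sub>R x" "t *\<^sub>R y"] by (simp add: is_normD(3)[OF assms])
  qed simp
qed simp

lemma is_norm_ge_norm:
  assumes N: "is_norm N"
  obtains c where "c > 0" "\<And>x. c * norm x \<le> N x"
proof -
  obtain x0 where x0: "x0 \<in> sphere 0 1" "\<And>y. y \<in> sphere 0 1 \<Longrightarrow> N x0 \<le> N y"
    using continuous_attains_inf[OF compact_sphere _ continuous_on_subset[OF is_norm_continuous[OF N]],
        of 0 1]
    by auto
  have "N x0 > 0" using x0(1) is_normD(1,2)[OF N, of x0] by fastforce
  moreover have "N x0 * norm x \<le> N x" for x
  proof (cases "x = 0")
    case False
    then have "N x0 \<le> N ((1 / norm x) *\<^sub>R x)" by (intro x0(2)) simp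
    with False show ?thesis by (simp add: is_normD(3)[OF N] field_simps)
  qed (simp add: is_norm_zero[OF N])
  ultimately show ?thesis using that by blast
qed

lemma is_norm_compact_sublevel: assumes N: "is_norm N" shows "compact {x. N x \<le> r}"
proof -
  obtain c where c: "c > 0" "\<And>x. c * norm x \<le> N x" using is_norm_ge_norm[OF N] by blast
  have "bounded {x. N x \<le> r}"
    using c by (intro boundedI[of _ "r / c"]) (auto simp: field_simps intro: order_trans)
  moreover have "closed {x. N x \<le> r}"
    using is_norm_continuous[OF N] by (simp add: closed_Collect_le continuous_on_const)
  ultimately show ?thesis by (simp add: compact_eq_bounded_closed)
qed

lemma norm_on_add_norm_restr_Compl:
  assumes Q: "norm_on A Q"
  shows "is_norm (\<lambda>x. Q x + norm (restr (- A) x))"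
proof (rule is_normI)
  fix x
  show "0 \<le> Q x + norm (restr (- A) x)" using norm_onD(2)[OF Q, of x] by simp
  show "Q x + norm (restr (- A) x) = 0 \<longleftrightarrow> x = 0"
  proof
    assume "Q x + norm (restr (- A) x) = 0"
    moreover have "0 \<le> Q x" "0 \<le> norm (restr (- A) x)" by (simp_all add: norm_onD(2)[OF Q])
    ultimately have "Q x = 0" "norm (restr (- A) x) = 0" by linarith+
    then have "restr A x = 0" "restr (- A) x = 0" using norm_onD(3)[OF Q] by simp_all
    then show "x = 0" using restr_add_restr_Compl[of A x] by simp
  qed (simp add: norm_on_zero[OF Q])
next
  fix c x y
  show "Q (c *\<^sub>R x) + norm (restr (- A) (c *\<^sub>R x)) \<le> \<bar>c\<bar> * (Q x + norm (restr (- A) x))"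
    by (simp add: norm_onD(4)[OF Q] restr_scaleR distrib_left)
  show "Q (x + y) + norm (restr (- A) (x + y))
      \<le> Q x + norm (restr (- A) x) + (Q y + norm (restr (- A) y))"
    using norm_onD(5)[OF Q, of x y] norm_triangle_ineq[of "restr (- A) x" "restr (- A) y"]
    by (simp add: restr_add)
qed

lemma norm_on_ge_norm_restr:
  assumes Q: "norm_on A Q"
  obtains c where "c > 0" "\<And>x. c * norm (restr A x) \<le> Q x"
proof -
  obtain c where c: "c > 0" "\<And>x. c * norm x \<le> Q x + norm (restr (- A) x)"
    using is_norm_ge_norm[OF norm_on_add_norm_restr_Compl[OF Q]] by blast
  have "c * norm (restr A x) \<le> Q x" for x
    using c(2)[of "restr A x"] norm_onD(1)[OF Q, of x] by (simp add: restr_restr_Compl)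
  with c(1) that show ?thesis by blast
qed

lemma norm_on_dual_bdd:
  assumes Q: "norm_on A Q"
  shows "bdd_above {\<beta> \<bullet> restr A z | \<beta>. Q \<beta> \<le> 1}"
proof -
  obtain c where c: "c > 0" "\<And>x. c * norm (restr A x) \<le> Q x"
    using norm_on_ge_norm_restr[OF Q] by blast
  have "\<beta> \<bullet> restr A z \<le> norm z / c" if "Q \<beta> \<le> 1" for \<beta>
  proof -
    have "norm (restr A \<beta>) \<le> 1 / c" using c order_trans[OF c(2) that] by (simp add: field_simps)
    then have "norm (restr A \<beta>) * norm z \<le> norm z / c"
      using mult_right_mono[of _ _ "norm z"] by fastforce
    moreover have "\<beta> \<bullet> restr A z \<le> norm (restr A \<beta>) * norm z"
      by (metis inner_restr Cauchy_Schwarz_ineq2 abs_le_D1)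
    ultimately show ?thesis by linarith
  qed
  then show ?thesis by (intro bdd_aboveI[of _ "norm z / c"]) blast
qed

lemma norm_on_dual_norm_le_iff:
  assumes Q: "norm_on A Q"
  shows "dual_norm Q (restr A z) \<le> u \<longleftrightarrow> (\<forall>\<beta>. Q \<beta> \<le> 1 \<longrightarrow> \<beta> \<bullet> restr A z \<le> u)"
proof -
  have "Q 0 \<le> 1" using norm_on_zero[OF Q] by simp
  then have "{\<beta> \<bullet> restr A z | \<beta>. Q \<beta> \<le> 1} \<noteq> {}" by blast
  then show ?thesis
    unfolding dual_norm_def by (subst cSup_le_iff[OF _ norm_on_dual_bdd[OF Q]]) auto
qed

lemma norm_on_dual_norm_ge:
  "norm_on A Q \<Longrightarrow> Q \<beta> \<le> 1 \<Longrightarrow> \<beta> \<bullet> restr A z \<le> dual_norm Q (restr A z)"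
  using norm_on_dual_norm_le_iff by blast

lemma norm_on_dual_norm_nonneg: "norm_on A Q \<Longrightarrow> 0 \<le> dual_norm Q (restr A z)"
  using norm_on_dual_norm_ge[of A Q 0] norm_on_zero by fastforce

lemma norm_on_inner_le_dual_norm:
  assumes Q: "norm_on A Q"
  shows "x \<bullet> restr A z \<le> Q x * dual_norm Q (restr A z)"
proof (cases "Q x = 0")
  case True
  then have "x \<bullet> restr A z = 0" using norm_onD(3)[OF Q] by (metis inner_restr inner_zero_left)
  then show ?thesis using True by simp
next
  case False
  then have pos: "Q x > 0" using norm_onD(2)[OF Q, of x] by linarith
  then have "((1 / Q x) *\<^sub>R x) \<bullet> restr A z \<le> dual_norm Q (restr A z)"
    by (intro norm_on_dual_norm_ge[OF Q]) (simp add: norm_onD(4)[OF Q])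
  with pos show ?thesis by (simp add: field_simps)
qed

lemma dual_norm_le_iff: "is_norm N \<Longrightarrow> dual_norm N z \<le> u \<longleftrightarrow> (\<forall>\<beta>. N \<beta> \<le> 1 \<longrightarrow> \<beta> \<bullet> z \<le> u)"
  using norm_on_dual_norm_le_iff[of UNIV N z] by (simp add: norm_on_UNIV_iff restr_UNIV)

lemma dual_norm_ge: "is_norm N \<Longrightarrow> N \<beta> \<le> 1 \<Longrightarrow> \<beta> \<bullet> z \<le> dual_norm N z"
  using dual_norm_le_iff by blast

lemma dual_norm_nonneg: "is_norm N \<Longrightarrow> 0 \<le> dual_norm N z"
  using norm_on_dual_norm_nonneg[of UNIV N z] by (simp add: norm_on_UNIV_iff restr_UNIV)

lemma inner_le_dual_norm: "is_norm N \<Longrightarrow> x \<bullet> z \<le> N x * dual_norm N z"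
  using norm_on_inner_le_dual_norm[of UNIV N x z] by (simp add: norm_on_UNIV_iff restr_UNIV)

lemma dual_norm_le_of_inner_le:
  assumes N: "is_norm N" and "0 \<le> u" and "\<And>\<beta>. \<beta> \<bullet> z \<le> N \<beta> * u"
  shows "dual_norm N z \<le> u"
  unfolding dual_norm_le_iff[OF N]
proof (intro allI impI)
  fix \<beta> assume "N \<beta> \<le> 1"
  then have "N \<beta> * u \<le> u" using \<open>0 \<le> u\<close> mult_right_mono[of "N \<beta>" 1 u] by simp
  with assms(3)[of \<beta>] show "\<beta> \<bullet> z \<le> u" by linarith
qed

lemma is_norm_dual_norm:
  assumes N: "is_norm N"
  shows "is_norm (dual_norm N)"
proof (rule is_normI)
  fix x
  show "0 \<le> dual_norm N x" by (rule dual_norm_nonneg[OF N])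
  show "dual_norm N x = 0 \<longleftrightarrow> x = 0"
  proof
    assume "dual_norm N x = 0"
    then have "x \<bullet> x \<le> 0" using inner_le_dual_norm[OF N, of x x] by simp
    then show "x = 0" by (metis inner_gt_zero_iff not_less)
  qed (use dual_norm_le_of_inner_le[OF N order.refl, of 0] dual_norm_nonneg[OF N, of 0] in simp)
next
  fix c x y
  show "dual_norm N (c *\<^sub>R x) \<le> \<bar>c\<bar> * dual_norm N x"
  proof (rule dual_norm_le_of_inner_le[OF N])
    fix \<beta>
    have "\<beta> \<bullet> (c *\<^sub>R x) \<le> \<bar>c\<bar> * \<bar>\<beta> \<bullet> x\<bar>" by (simp add: abs_mult[symmetric])
    also have "\<dots> \<le> \<bar>c\<bar> * (N \<beta> * dual_norm N x)"
      using inner_le_dual_norm[OF N, of \<beta> x] inner_le_dual_norm[OF N, of "- \<beta>" x]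
      by (intro mult_left_mono) (simp_all add: is_norm_uminus[OF N])
    finally show "\<beta> \<bullet> (c *\<^sub>R x) \<le> N \<beta> * (\<bar>c\<bar> * dual_norm N x)"
      by (simp add: algebra_simps)
  qed (simp add: dual_norm_nonneg[OF N])
  show "dual_norm N (x + y) \<le> dual_norm N x + dual_norm N y"
  proof (rule dual_norm_le_of_inner_le[OF N])
    fix \<beta>
    show "\<beta> \<bullet> (x + y) \<le> N \<beta> * (dual_norm N x + dual_norm N y)"
      using inner_le_dual_norm[OF N, of \<beta> x] inner_le_dual_norm[OF N, of \<beta> y]
      by (simp add: inner_add_right distrib_left)
  qed (simp add: dual_norm_nonneg[OF N])
qed

lemma norm_on_restr: "is_norm \<Omega> \<Longrightarrow> norm_on S (\<lambda>\<beta>. \<Omega> (restr S \<beta>))"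
  by (simp add: norm_on_def is_norm_def restr_restr restr_add flip: scalar_mult_eq_scaleR)
    (simp add: scalar_mult_eq_scaleR restr_scaleR)

lemma norm_on_block_sum_eq:
  assumes "norm_on A P" "norm_on (- A) Q"
  shows "P (restr A \<beta>) + Q (restr A \<beta>) = P \<beta>" "P (restr (- A) \<beta>) + Q (restr (- A) \<beta>) = Q \<beta>"
  using norm_onD(1)[OF assms(1)] norm_onD(1)[OF assms(2)] norm_on_zero[OF assms(1)]
    norm_on_zero[OF assms(2)]
  by (metis add_0 add.right_neutral double_complement restr_restr restr_restr_Compl)+

lemma is_norm_block_sum:
  assumes P: "norm_on A P" and Q: "norm_on (- A) Q"
  shows "is_norm (\<lambda>x. P x + Q x)"
proof (rule is_normI)
  fix x
  show "P x + Q x = 0 \<longleftrightarrow> x = 0"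
  proof
    assume "P x + Q x = 0"
    then have "restr A x = 0" "restr (- A) x = 0"
      using norm_onD(2,3)[OF P, of x] norm_onD(2,3)[OF Q, of x] by auto
    then show "x = 0" using restr_add_restr_Compl[of A x] by simp
  qed (simp add: norm_on_zero[OF P] norm_on_zero[OF Q])
next
  fix x y
  show "P (x + y) + Q (x + y) \<le> P x + Q x + (P y + Q y)"
    using norm_onD(5)[OF P, of x y] norm_onD(5)[OF Q, of x y] by linarith
qed (simp_all add: norm_onD(2,4)[OF P] norm_onD(2,4)[OF Q] distrib_left)

lemma dual_norm_block_sum:
  assumes P: "norm_on A P" and Q: "norm_on (- A) Q"
  shows "dual_norm (\<lambda>x. P x + Q x) z = max (dual_norm P (restr A z)) (dual_norm Q (restr (- A) z))"
    (is "dual_norm ?N z = max ?a ?b")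
proof (rule order.antisym)
  have N: "is_norm ?N" by (rule is_norm_block_sum[OF P Q])
  show "dual_norm ?N z \<le> max ?a ?b"
  proof (rule dual_norm_le_of_inner_le[OF N])
    show "0 \<le> max ?a ?b" using norm_on_dual_norm_nonneg[OF P, of z] by (simp add: le_max_iff_disj)
    fix \<beta>
    have "\<beta> \<bullet> z = \<beta> \<bullet> restr A z + \<beta> \<bullet> restr (- A) z"
      by (metis inner_add_right restr_add_restr_Compl)
    also have "\<dots> \<le> P \<beta> * ?a + Q \<beta> * ?b"
      using norm_on_inner_le_dual_norm[OF P] norm_on_inner_le_dual_norm[OF Q] by (rule add_mono)
    also have "\<dots> \<le> P \<beta> * max ?a ?b + Q \<beta> * max ?a ?b"
      using norm_onD(2)[OF P] norm_onD(2)[OF Q] by (intro add_mono mult_left_mono) simp_all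
    finally show "\<beta> \<bullet> z \<le> ?N \<beta> * max ?a ?b" by (simp add: distrib_right)
  qed
  have "?a \<le> dual_norm ?N z"
    unfolding norm_on_dual_norm_le_iff[OF P]
    using dual_norm_ge[OF N, of "restr A _" z] norm_on_block_sum_eq(1)[OF P Q]
    by (simp add: inner_restr)
  moreover have "?b \<le> dual_norm ?N z"
    unfolding norm_on_dual_norm_le_iff[OF Q]
    using dual_norm_ge[OF N, of "restr (- A) _" z] norm_on_block_sum_eq(2)[OF P Q]
    by (simp add: inner_restr)
  ultimately show "max ?a ?b \<le> dual_norm ?N z" by simp
qed

lemma dual_norm_restr:
  assumes \<Omega>: "is_norm \<Omega>" and mono: "\<And>\<beta>. \<Omega> (restr S \<beta>) \<le> \<Omega> \<beta>"
  shows "dual_norm (\<lambda>\<beta>. \<Omega> (restr S \<beta>)) (restr S z) = dual_norm \<Omega> (restr S z)"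
proof (rule order.antisym)
  show "dual_norm (\<lambda>\<beta>. \<Omega> (restr S \<beta>)) (restr S z) \<le> dual_norm \<Omega> (restr S z)"
    unfolding norm_on_dual_norm_le_iff[OF norm_on_restr[OF \<Omega>]]
    using dual_norm_ge[OF \<Omega>, of "restr S _" "restr S z"] by (simp add: inner_restr restr_restr)
  show "dual_norm \<Omega> (restr S z) \<le> dual_norm (\<lambda>\<beta>. \<Omega> (restr S \<beta>)) (restr S z)"
    unfolding dual_norm_le_iff[OF \<Omega>]
    using norm_on_dual_norm_ge[OF norm_on_restr[OF \<Omega>]] mono order_trans by blast
qed

definition minkowski_gauge :: "(real^'n) set \<Rightarrow> real^'n \<Rightarrow> real" where
  "minkowski_gauge K x = Inf {t. t > 0 \<and> x \<in> (\<lambda>y. t *s y) ` K}"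

lemma minkowski_gauge_norm_ball:
  assumes N: "is_norm N"
  shows "minkowski_gauge {x. N x \<le> 1} x = N x"
proof -
  have "x \<in> (\<lambda>y. t *s y) ` {x. N x \<le> 1} \<longleftrightarrow> N x \<le> t" if "t > 0" for t
  proof -
    have "x \<in> (\<lambda>y. t *s y) ` {x. N x \<le> 1} \<longleftrightarrow> N ((1 / t) *\<^sub>R x) \<le> 1"
      using that by (auto simp: scalar_mult_eq_scaleR image_iff intro!: bexI[of _ "(1 / t) *\<^sub>R x"])
    also have "\<dots> \<longleftrightarrow> N x \<le> t" using that by (simp add: is_normD(3)[OF N] field_simps)
    finally show ?thesis .
  qed
  then have T: "{t. t > 0 \<and> x \<in> (\<lambda>y. t *s y) ` {x. N x \<le> 1}} = {t. t > 0 \<and> N x \<le> t}"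
    by blast
  have mem: "N x + e \<in> {t. t > 0 \<and> N x \<le> t}" if "e > 0" for e
    using that is_normD(1)[OF N, of x] by simp
  have "Inf {t. t > 0 \<and> N x \<le> t} = N x"
  proof (rule order.antisym)
    show "Inf {t. t > 0 \<and> N x \<le> t} \<le> N x"
      by (rule field_le_epsilon) (auto intro: cInf_lower[OF mem] bdd_belowI[of _ 0])
    show "N x \<le> Inf {t. t > 0 \<and> N x \<le> t}"
      using mem[of 1] by (intro cInf_greatest) auto
  qed
  then show ?thesis unfolding minkowski_gauge_def T .
qed

lemma closed_convex_eq_dual_norm_ball:
  assumes M: "is_norm M" and K: "convex K" "closed K" "0 \<in> K"
    and polar: "\<And>y. M y \<le> 1 \<longleftrightarrow> (\<forall>b\<in>K. b \<bullet> y \<le> 1)"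
  shows "K = {x. dual_norm M x \<le> 1}"
proof (intro set_eqI iffI; simp)
  fix x assume "x \<in> K"
  then show "dual_norm M x \<le> 1"
    unfolding dual_norm_le_iff[OF M] using polar by (simp add: inner_commute)
next
  fix x assume dual: "dual_norm M x \<le> 1"
  show "x \<in> K"
  proof (rule ccontr)
    assume "x \<notin> K"
    then obtain a c where ac: "a \<bullet> x < c" "\<And>w. w \<in> K \<Longrightarrow> a \<bullet> w > c"
      using separating_hyperplane_closed_point[OF K(1,2)] by blast
    have "c < 0" using ac(2)[OF K(3)] by simp
    define y where "y = (1 / c) *\<^sub>R a"
    have "w \<bullet> y \<le> 1" if "w \<in> K" for w
      using ac(2)[OF that] \<open>c < 0\<close> by (simp add: y_def inner_commute divide_le_eq)
    then have "y \<bullet> x \<le> 1" using dual_norm_ge[OF M] polar dual by (meson order_trans)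
    moreover have "y \<bullet> x > 1" using ac(1) \<open>c < 0\<close> by (simp add: y_def less_divide_eq)
    ultimately show False by simp
  qed
qed

locale allowed_decomposition =
  fixes \<Omega> :: "real^'n \<Rightarrow> real"
    and Omc :: "'n set \<Rightarrow> real^'n \<Rightarrow> real"
  assumes norm_\<Omega>: "is_norm \<Omega>"
    and Omc_choice: "\<And>S. allowed \<Omega> S \<Longrightarrow> norm_on (- S) (Omc S) \<and>
        (\<forall>\<beta>. \<Omega> (restr S \<beta>) + Omc S (restr (- S) \<beta>) \<le> \<Omega> \<beta>)"
begin

abbreviation U :: "'n set \<Rightarrow> real^'n \<Rightarrow> real" where
  "U S \<equiv> Upsilon \<Omega> Omc S"

lemma Upsilon_le: "allowed \<Omega> S \<Longrightarrow> U S \<beta> \<le> \<Omega> \<beta>"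
  using Omc_choice unfolding Upsilon_def by blast

lemma Upsilon_eq: "allowed \<Omega> S \<Longrightarrow> U S = (\<lambda>\<beta>. \<Omega> (restr S \<beta>) + Omc S \<beta>)"
  using Omc_choice norm_onD(1) unfolding Upsilon_def by metis

lemma is_norm_Upsilon: "allowed \<Omega> S \<Longrightarrow> is_norm (U S)"
  using is_norm_block_sum[OF norm_on_restr[OF norm_\<Omega>]] Omc_choice by (simp add: Upsilon_eq)

lemma dual_norm_Upsilon:
  assumes S: "allowed \<Omega> S"
  shows "dual_norm (U S) z = max (dual_norm \<Omega> (restr S z)) (dual_norm (Omc S) (restr (- S) z))"
proof -
  have Q: "norm_on (- S) (Omc S)" using Omc_choice[OF S] by blast
  have "\<Omega> (restr S \<beta>) \<le> \<Omega> \<beta>" for \<beta>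
    using Upsilon_le[OF S, of \<beta>] norm_onD(2)[OF Q, of \<beta>] unfolding Upsilon_eq[OF S] by linarith
  then show ?thesis
    by (simp add: Upsilon_eq[OF S] dual_norm_block_sum[OF norm_on_restr[OF norm_\<Omega>] Q]
        dual_norm_restr[OF norm_\<Omega>])
qed

lemma Mnorm_eq_Max:
  "Mnorm \<Omega> Omc J = (\<lambda>y. Max ((\<lambda>S. max (dual_norm (U S) y) (dual_norm (U S) (flipv J y)))
      ` {S. allowed \<Omega> S}))"
  unfolding Mnorm_def by (simp add: image_Collect)

lemma Mnorm_le_iff:
  "Mnorm \<Omega> Omc J y \<le> u \<longleftrightarrow>
    (\<forall>S. allowed \<Omega> S \<longrightarrow> dual_norm (U S) y \<le> u \<and> dual_norm (U S) (flipv J y) \<le> u)"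
  unfolding Mnorm_eq_Max using allowed_UNIV[of \<Omega>] by (subst Max_le_iff) auto

lemma is_norm_Mnorm: "is_norm (Mnorm \<Omega> Omc J)"
  unfolding Mnorm_eq_Max
  using allowed_UNIV[of \<Omega>] is_norm_dual_norm[OF is_norm_Upsilon]
  by (intro is_norm_Max is_norm_max is_norm_compose_linear[OF _ linear_flipv inj_flipv]) auto

lemma Mnorm_restr_Compl_le: "Mnorm \<Omega> Omc J (restr (- J) y) \<le> Mnorm \<Omega> Omc J y"
proof -
  note M = is_norm_Mnorm[of J]
  have flip: "Mnorm \<Omega> Omc J (flipv J y) \<le> Mnorm \<Omega> Omc J y"
    unfolding Mnorm_le_iff[of J "flipv J y"]
    using Mnorm_le_iff[of J y "Mnorm \<Omega> Omc J y"] by (simp add: flipv_flipv)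
  have "Mnorm \<Omega> Omc J (restr (- J) y) = (1/2) * Mnorm \<Omega> Omc J (y + - flipv J y)"
    by (simp add: restr_Compl_eq_flipv is_normD(3)[OF M])
  also have "\<dots> \<le> (1/2) * (Mnorm \<Omega> Omc J y + Mnorm \<Omega> Omc J (flipv J y))"
    using is_normD(4)[OF M, of y "- flipv J y"] by (simp add: is_norm_uminus[OF M])
  finally show ?thesis using flip by simp
qed


lemma dual_norm_Upsilon_le_Mnorm:
  "allowed \<Omega> S \<Longrightarrow> dual_norm (U S) y \<le> Mnorm \<Omega> Omc J y"
  "allowed \<Omega> S \<Longrightarrow> dual_norm (U S) (flipv J y) \<le> Mnorm \<Omega> Omc J y"
  using Mnorm_le_iff[of J y "Mnorm \<Omega> Omc J y"] by simp_all

lemma Bg_polar: "Mnorm \<Omega> Omc J y \<le> 1 \<longleftrightarrow> (\<forall>b\<in>Bg \<Omega> Omc J. b \<bullet> y \<le> 1)"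
proof -
  have "(\<forall>b\<in>Bg \<Omega> Omc J. b \<bullet> y \<le> 1) \<longleftrightarrow> Bg \<Omega> Omc J \<subseteq> {b. y \<bullet> b \<le> 1}"
    by (auto simp: inner_commute)
  also have "\<dots> \<longleftrightarrow> Bbar \<Omega> Omc \<union> flipset J (Bbar \<Omega> Omc) \<subseteq> {b. y \<bullet> b \<le> 1}"
    unfolding Bg_def by (rule subset_hull[of convex, OF convex_halfspace_le])
  also have "\<dots> \<longleftrightarrow> (\<forall>S. allowed \<Omega> S \<longrightarrow>
      (\<forall>\<beta>. U S \<beta> \<le> 1 \<longrightarrow> \<beta> \<bullet> y \<le> 1) \<and> (\<forall>\<beta>. U S \<beta> \<le> 1 \<longrightarrow> \<beta> \<bullet> flipv J y \<le> 1))"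
    unfolding Bbar_def flipset_def by (auto simp: inner_commute[of y] inner_flipv image_subset_iff)
  also have "\<dots> \<longleftrightarrow> Mnorm \<Omega> Omc J y \<le> 1"
    unfolding Mnorm_le_iff using dual_norm_le_iff[OF is_norm_Upsilon] by blast
  finally show ?thesis by simp
qed

lemma compact_Bg: "compact (Bg \<Omega> Omc J)"
proof -
  have Bbar: "compact (Bbar \<Omega> Omc)"
    unfolding Bbar_def by (intro compact_UN) (simp_all add: is_norm_compact_sublevel is_norm_Upsilon)
  have "compact (flipset J (Bbar \<Omega> Omc))"
    unfolding flipset_def using linear_flipv
    by (intro compact_continuous_image[OF linear_continuous_on Bbar])
      (simp add: linear_conv_bounded_linear[symmetric])
  with Bbar show ?thesis unfolding Bg_def by (intro compact_convex_hull compact_Un)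
qed

lemma zero_in_Bg: "0 \<in> Bg \<Omega> Omc J"
proof -
  have "0 \<in> Bbar \<Omega> Omc"
    unfolding Bbar_def using allowed_UNIV is_norm_zero[OF is_norm_Upsilon] by fastforce
  then show ?thesis unfolding Bg_def by (blast intro: hull_inc)
qed

lemma gauge_g_eq_dual_Mnorm: "gauge_g \<Omega> Omc J = dual_norm (Mnorm \<Omega> Omc J)"
proof -
  have "Bg \<Omega> Omc J = {x. dual_norm (Mnorm \<Omega> Omc J) x \<le> 1}"
    using is_norm_Mnorm compact_imp_closed[OF compact_Bg] zero_in_Bg Bg_polar
    by (intro closed_convex_eq_dual_norm_ball) (simp_all add: Bg_def)
  then show ?thesis
    using minkowski_gauge_norm_ball[OF is_norm_dual_norm[OF is_norm_Mnorm]]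
    by (simp add: fun_eq_iff gauge_g_def minkowski_gauge_def)
qed

lemma is_norm_gauge_g: "is_norm (gauge_g \<Omega> Omc J)"
  by (simp add: gauge_g_eq_dual_Mnorm is_norm_dual_norm is_norm_Mnorm)

lemma gauge_g_le_Upsilon:
  assumes S: "allowed \<Omega> S"
  shows "gauge_g \<Omega> Omc J \<beta> \<le> U S \<beta>" "gauge_g \<Omega> Omc J \<beta> \<le> U S (flipv J \<beta>)"
proof -
  note M = is_norm_Mnorm[of J] and N = is_norm_Upsilon[OF S]
  show "gauge_g \<Omega> Omc J \<beta> \<le> U S \<beta>"
    unfolding gauge_g_eq_dual_Mnorm
  proof (rule dual_norm_le_of_inner_le[OF M is_normD(1)[OF N]])
    fix y
    have "y \<bullet> \<beta> \<le> U S \<beta> * dual_norm (U S) y"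
      using inner_le_dual_norm[OF N] by (simp add: inner_commute)
    also have "\<dots> \<le> U S \<beta> * Mnorm \<Omega> Omc J y"
      by (intro mult_left_mono dual_norm_Upsilon_le_Mnorm S is_normD(1)[OF N])
    finally show "y \<bullet> \<beta> \<le> Mnorm \<Omega> Omc J y * U S \<beta>" by (simp add: mult.commute)
  qed
  show "gauge_g \<Omega> Omc J \<beta> \<le> U S (flipv J \<beta>)"
    unfolding gauge_g_eq_dual_Mnorm
  proof (rule dual_norm_le_of_inner_le[OF M is_normD(1)[OF N]])
    fix y
    have "y \<bullet> \<beta> \<le> U S (flipv J \<beta>) * dual_norm (U S) (flipv J y)"
      using inner_le_dual_norm[OF N, of "flipv J \<beta>" "flipv J y"]
      by (simp add: inner_flipv flipv_flipv inner_commute)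
    also have "\<dots> \<le> U S (flipv J \<beta>) * Mnorm \<Omega> Omc J y"
      by (intro mult_left_mono dual_norm_Upsilon_le_Mnorm S is_normD(1)[OF N])
    finally show "y \<bullet> \<beta> \<le> Mnorm \<Omega> Omc J y * U S (flipv J \<beta>)" by (simp add: mult.commute)
  qed
qed

lemma gauge_g_restr_Compl_le: "gauge_g \<Omega> Omc J (restr (- J) \<beta>) \<le> gauge_g \<Omega> Omc J \<beta>"
  unfolding gauge_g_eq_dual_Mnorm
proof (rule dual_norm_le_of_inner_le[OF is_norm_Mnorm dual_norm_nonneg[OF is_norm_Mnorm]])
  fix y
  have "y \<bullet> restr (- J) \<beta> \<le> Mnorm \<Omega> Omc J (restr (- J) y) * dual_norm (Mnorm \<Omega> Omc J) \<beta>"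
    using inner_le_dual_norm[OF is_norm_Mnorm] by (simp add: inner_restr[symmetric])
  also have "\<dots> \<le> Mnorm \<Omega> Omc J y * dual_norm (Mnorm \<Omega> Omc J) \<beta>"
    by (intro mult_right_mono Mnorm_restr_Compl_le dual_norm_nonneg[OF is_norm_Mnorm])
  finally show "y \<bullet> restr (- J) \<beta> \<le> Mnorm \<Omega> Omc J y * dual_norm (Mnorm \<Omega> Omc J) \<beta>" .
qed

end

theorem lemma2:
  fixes \<Omega> :: "real^'n \<Rightarrow> real"
    and Omc :: "'n set \<Rightarrow> real^'n \<Rightarrow> real"
    and J :: "'n set"
  assumes norm_\<Omega>: "is_norm \<Omega>"
    and Omc_choice: "\<And>S. allowed \<Omega> S \<Longrightarrow> norm_on (- S) (Omc S) \<and>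
        (\<forall>\<beta>. \<Omega> (restr S \<beta>) + Omc S (restr (- S) \<beta>) \<le> \<Omega> \<beta>)"
  shows "is_norm (gauge_g \<Omega> Omc J)
    \<and> (\<forall>S \<beta>. allowed \<Omega> S \<longrightarrow>
           gauge_g \<Omega> Omc J \<beta> \<le> Upsilon \<Omega> Omc S \<beta> \<and> Upsilon \<Omega> Omc S \<beta> \<le> \<Omega> \<beta>
           \<and> gauge_g \<Omega> Omc J \<beta> \<le> Upsilon \<Omega> Omc S (flipv J \<beta>))
    \<and> is_norm (Mnorm \<Omega> Omc J)
    \<and> (\<forall>x. gauge_g \<Omega> Omc J x = dual_norm (Mnorm \<Omega> Omc J) x)
    \<and> (\<forall>S z. allowed \<Omega> S \<longrightarrow>
           dual_norm (Upsilon \<Omega> Omc S) z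
             = max (dual_norm \<Omega> (restr S z)) (dual_norm (Omc S) (restr (- S) z)))
    \<and> (\<forall>\<beta>. gauge_g \<Omega> Omc J (restr (- J) \<beta>) \<le> gauge_g \<Omega> Omc J \<beta>)"
proof -
  interpret allowed_decomposition \<Omega> Omc
    using norm_\<Omega> Omc_choice by unfold_locales
  show ?thesis
    using is_norm_gauge_g gauge_g_le_Upsilon Upsilon_le is_norm_Mnorm gauge_g_eq_dual_Mnorm
      dual_norm_Upsilon gauge_g_restr_Compl_le
    by simp
qed

end
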